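(* If a quadrilateral $q$ is $\frac{\pi}{12}$-near square and has a right angle adjacent to an acute angle, then $q$ has a periodic billiard path.
   Context: A quadrilateral is cut by a diagonal into two triangles. Its parameters $(a_1,a_2,a_3,a_4)$ are the four angles that the diagonal makes with the four sides (the angles of the two triangles at the endpoints of the diagonal). For $\varepsilon>0$, the quadrilateral is $\varepsilon$-near square if $|a_i-\pi/4|<\varepsilon$ for all $i$. A billiard path is a straight-line trajectory inside the polygon that reflects off the sides with angle of incidence equal to angle of reflection. Trajectories hitting vertices are excluded. It is periodic if it repeats itself. *)

theory Defs
  imports "HOL-Analysis.Analysis"
begin

text \<open>Points of the Euclidean plane are modelled as complex numbers.
  A quadrilateral is given by its four vertices A B C D in cyclic order,
  cut by the diagonal AC into the triangles ABC and ACD.\<close>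

definition vang :: "complex \<Rightarrow> complex \<Rightarrow> real" where
  "vang u v = arccos ((u \<bullet> v) / (norm u * norm v))"

definition cross :: "complex \<Rightarrow> complex \<Rightarrow> real" where
  "cross u v = Im (cnj u * v)"

text \<open>A B C D is a quadrilateral cut by the diagonal AC into two (nondegenerate)
  triangles: B and D lie strictly on opposite sides of the line AC.\<close>
definition quadrilateral :: "complex \<Rightarrow> complex \<Rightarrow> complex \<Rightarrow> complex \<Rightarrow> bool" where
  "quadrilateral A B C D \<longleftrightarrow> cross (C - A) (B - A) * cross (C - A) (D - A) < 0"

text \<open>The four parameters: angles of the triangles ABC and ACD at the
  endpoints A, C of the diagonal, i.e. the angles the diagonal makes with the
  sides AB, CB, CD, AD.\<close>
definition quad_params :: "complex \<Rightarrow> complex \<Rightarrow> complex \<Rightarrow> complex \<Rightarrow> real list" where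
  "quad_params A B C D =
     [vang (B - A) (C - A), vang (B - C) (A - C), vang (D - C) (A - C), vang (D - A) (C - A)]"

definition near_square :: "real \<Rightarrow> complex \<Rightarrow> complex \<Rightarrow> complex \<Rightarrow> complex \<Rightarrow> bool" where
  "near_square \<epsilon> A B C D \<longleftrightarrow> (\<forall>a \<in> set (quad_params A B C D). \<bar>a - pi / 4\<bar> < \<epsilon>)"

text \<open>Interior angles at A, B, C, D (in cyclic order). At the endpoints of the
  diagonal the interior angle is the sum of the two triangle angles.\<close>
definition interior_angles :: "complex \<Rightarrow> complex \<Rightarrow> complex \<Rightarrow> complex \<Rightarrow> real list" where
  "interior_angles A B C D =
     [vang (B - A) (C - A) + vang (D - A) (C - A),
      vang (A - B) (C - B),
      vang (B - C) (A - C) + vang (D - C) (A - C),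
      vang (A - D) (C - D)]"

definition right_adj_acute :: "complex \<Rightarrow> complex \<Rightarrow> complex \<Rightarrow> complex \<Rightarrow> bool" where
  "right_adj_acute A B C D \<longleftrightarrow>
     (\<exists>i < 4. let x = interior_angles A B C D ! i;
                  y = interior_angles A B C D ! ((i + 1) mod 4)
              in (x = pi / 2 \<and> y < pi / 2) \<or> (y = pi / 2 \<and> x < pi / 2))"

definition quad_region :: "complex \<Rightarrow> complex \<Rightarrow> complex \<Rightarrow> complex \<Rightarrow> complex set" where
  "quad_region A B C D = convex hull {A, B, C} \<union> convex hull {A, C, D}"

definition quad_sides :: "complex \<Rightarrow> complex \<Rightarrow> complex \<Rightarrow> complex \<Rightarrow> (complex \<times> complex) set" where
  "quad_sides A B C D = {(A, B), (B, C), (C, D), (D, A)}"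

definition reflect_dir :: "complex \<Rightarrow> complex \<Rightarrow> complex" where
  "reflect_dir s v = (2 * (v \<bullet> s) / (s \<bullet> s)) *\<^sub>R s - v"

text \<open>A periodic billiard path: a periodic sequence of bounce points p i, each in
  the relative interior of a side (so no vertex is hit), consecutive points joined
  by straight segments running through the interior of the quadrilateral, and at
  each bounce the angle of incidence equals the angle of reflection (the outgoing
  unit direction is the mirror image of the incoming one in the side).\<close>
definition has_periodic_billiard_path :: "complex \<Rightarrow> complex \<Rightarrow> complex \<Rightarrow> complex \<Rightarrow> bool" where
  "has_periodic_billiard_path A B C D \<longleftrightarrow>
     (\<exists>(p :: nat \<Rightarrow> complex) (n :: nat). n > 0 \<and>
        (\<forall>i. p (i + n) = p i) \<and>
        (\<forall>i. p i \<noteq> p (Suc i)) \<and>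
        (\<forall>i. open_segment (p i) (p (Suc i)) \<subseteq> interior (quad_region A B C D)) \<and>
        (\<forall>i. \<exists>(X, Y) \<in> quad_sides A B C D.
              p (Suc i) \<in> open_segment X Y \<and>
              (p (Suc (Suc i)) - p (Suc i)) /\<^sub>R norm (p (Suc (Suc i)) - p (Suc i)) =
                reflect_dir (Y - X) ((p (Suc i) - p i) /\<^sub>R norm (p (Suc i) - p i))))"

end

theory Submission
  imports Defs
begin

text \<open>Send the diagonal to the segment from 0 to 1. Let the right angle sit at X with the acute
  angle at the neighbour Y, and let Z be the vertex opposite X. A ray leaving YZ perpendicularly
  towards XY reflects off XY and then off the other side XW through X; reflections in the
  perpendicular lines XY and XW compose to a half turn, so the ray comes back perpendicular to
  YZ and then retraces its path, an orbit of period six. Such a ray fits into the quadrilateral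
  as soon as the foot of the perpendicular from X to the line YZ lies strictly inside YZ, that
  is, when the angles at Y and at Z of the triangle XYZ are acute. If X is an endpoint of the
  diagonal, the angle at Z is one of the diagonal angles, which all lie in (\<pi>/6, \<pi>/3). If X
  is one of the other two vertices, it lies on the circle over the diagonal, and the angle at Z
  is acute by a short estimate from the same bounds.\<close>

section \<open>Billiard paths in a region of the plane\<close>

lemma inner_mult_both: "(k * a) \<bullet> (k * b) = (cmod k)\<^sup>2 * (a \<bullet> b)"
  by (simp only: cmod_power2) (simp add: inner_complex_def algebra_simps power2_eq_square)

lemma inner_cnj: "cnj a \<bullet> cnj b = a \<bullet> b"
  by (simp add: inner_complex_def)

lemma reflect_dir_scaleR: "reflect_dir s (c *\<^sub>R v) = c *\<^sub>R reflect_dir s v"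
  by (simp add: reflect_dir_def algebra_simps)

lemma reflect_dir_minus: "reflect_dir s (- v) = - reflect_dir s v"
  using reflect_dir_scaleR[of s "-1" v] by simp

lemma reflect_dir_minus_dir: "reflect_dir (- s) v = reflect_dir s v"
  by (simp add: reflect_dir_def)

lemma reflect_dir_involution: "s \<noteq> 0 \<Longrightarrow> reflect_dir s (reflect_dir s v) = v"
  by (simp add: reflect_dir_def inner_diff_left inner_scaleR_left algebra_simps)

lemma reflect_dir_orthogonal: "v \<bullet> s = 0 \<Longrightarrow> reflect_dir s v = - v"
  by (simp add: reflect_dir_def)

lemma reflect_dir_one: "reflect_dir 1 v = cnj v"
  by (simp add: reflect_dir_def inner_complex_def complex_eq_iff)

lemma reflect_dir_imaginary: "Re s = 0 \<Longrightarrow> s \<noteq> 0 \<Longrightarrow> reflect_dir s v = - cnj v"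
  by (simp add: reflect_dir_def inner_complex_def complex_eq_iff power2_eq_square)

lemma norm_reflect_dir: "s \<noteq> 0 \<Longrightarrow> norm (reflect_dir s v) = norm v"
  by (simp add: norm_eq_sqrt_inner reflect_dir_def inner_diff_left inner_diff_right
      inner_commute power2_eq_square field_simps)

lemma sgn_reflect_dir:
  assumes "s \<noteq> 0" "0 < l" "w = l *\<^sub>R reflect_dir s v"
  shows "sgn w = reflect_dir s (sgn v)"
  using assms by (simp add: sgn_div_norm norm_reflect_dir reflect_dir_scaleR)

lemma reflect_dir_mult: "reflect_dir (k * s) (k * v) = k * reflect_dir s v"
proof (cases "k = 0")
  case False
  then show ?thesis
    by (simp add: reflect_dir_def inner_mult_both scaleR_conv_of_real right_diff_distrib
        mult.left_commute)
qed (simp add: reflect_dir_def)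

lemma reflect_dir_cnj: "reflect_dir (cnj s) (cnj v) = cnj (reflect_dir s v)"
  by (simp add: reflect_dir_def inner_complex_def complex_eq_iff)

definition billiard_bounce :: "(complex \<times> complex) set \<Rightarrow> complex \<Rightarrow> complex \<Rightarrow> complex \<Rightarrow> bool"
  where "billiard_bounce sides p q r \<longleftrightarrow>
    (\<exists>(X, Y) \<in> sides. q \<in> open_segment X Y \<and> sgn (r - q) = reflect_dir (Y - X) (sgn (q - p)))"

definition periodic_billiard :: "complex set \<Rightarrow> (complex \<times> complex) set \<Rightarrow> bool"
  where "periodic_billiard S sides \<longleftrightarrow>
    (\<exists>(p :: nat \<Rightarrow> complex) n. n > 0 \<and> (\<forall>i. p (i + n) = p i) \<and> (\<forall>i. p i \<noteq> p (Suc i)) \<and>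
      (\<forall>i. open_segment (p i) (p (Suc i)) \<subseteq> interior S) \<and>
      (\<forall>i. billiard_bounce sides (p i) (p (Suc i)) (p (Suc (Suc i)))))"

lemma has_periodic_billiard_path_iff:
  "has_periodic_billiard_path A B C D \<longleftrightarrow> periodic_billiard (quad_region A B C D) (quad_sides A B C D)"
  by (simp add: has_periodic_billiard_path_def periodic_billiard_def billiard_bounce_def sgn_div_norm)

lemma billiard_bounce_reverse:
  assumes "billiard_bounce sides p q r"
  shows "billiard_bounce sides r q p"
proof -
  obtain X Y where XY: "(X, Y) \<in> sides" "q \<in> open_segment X Y"
    and law: "sgn (r - q) = reflect_dir (Y - X) (sgn (q - p))"
    using assms by (auto simp: billiard_bounce_def)
  have "Y - X \<noteq> 0" using XY(2) by auto
  then have "sgn (q - p) = reflect_dir (Y - X) (sgn (r - q))"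
    by (simp add: law reflect_dir_involution)
  then have "sgn (p - q) = reflect_dir (Y - X) (sgn (q - r))"
    by (metis minus_diff_eq sgn_minus reflect_dir_minus)
  then show ?thesis using XY by (auto simp: billiard_bounce_def)
qed

lemma billiard_bounce_orthogonal:
  assumes "(X, Y) \<in> sides" "q \<in> open_segment X Y" "(q - p) \<bullet> (Y - X) = 0"
  shows "billiard_bounce sides p q p"
proof -
  have "sgn (q - p) \<bullet> (Y - X) = 0" using assms(3) by (simp add: sgn_div_norm)
  then have "sgn (p - q) = reflect_dir (Y - X) (sgn (q - p))"
    by (simp add: reflect_dir_orthogonal flip: sgn_minus)
  then show ?thesis using assms(1,2) by (auto simp: billiard_bounce_def)
qed

lemma billiard_bounce_flip_sides:
  assumes "billiard_bounce sides p q r" "\<forall>(X, Y) \<in> sides. (X, Y) \<in> sides' \<or> (Y, X) \<in> sides'"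
  shows "billiard_bounce sides' p q r"
proof -
  obtain X Y where XY: "(X, Y) \<in> sides" "q \<in> open_segment X Y"
    and law: "sgn (r - q) = reflect_dir (Y - X) (sgn (q - p))"
    using assms(1) by (auto simp: billiard_bounce_def)
  have flip: "reflect_dir (X - Y) = reflect_dir (Y - X)"
    using reflect_dir_minus_dir[of "Y - X"] by (simp add: fun_eq_iff)
  from assms(2) XY(1) consider "(X, Y) \<in> sides'" | "(Y, X) \<in> sides'" by blast
  then show ?thesis
  proof cases
    case 1
    then show ?thesis using XY(2) law by (auto simp: billiard_bounce_def)
  next
    case 2
    then show ?thesis using XY(2) law flip unfolding billiard_bounce_def
      by (intro bexI[of _ "(Y, X)"]) (simp_all add: open_segment_commute)
  qed
qed

lemma periodic_billiard_flip_sides: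
  assumes "periodic_billiard S sides" "\<forall>(X, Y) \<in> sides. (X, Y) \<in> sides' \<or> (Y, X) \<in> sides'"
  shows "periodic_billiard S sides'"
  using assms(1) billiard_bounce_flip_sides[OF _ assms(2)] unfolding periodic_billiard_def by blast

lemma periodic_billiard_image:
  assumes "periodic_billiard S sides" "inj f"
    and "\<And>a b. open_segment (f a) (f b) = f ` open_segment a b"
    and "f ` interior S \<subseteq> interior T"
    and "\<And>p q r. billiard_bounce sides p q r \<Longrightarrow> billiard_bounce sides' (f p) (f q) (f r)"
  shows "periodic_billiard T sides'"
proof -
  obtain p n where "n > 0" "\<forall>i. p (i + n) = p i" "\<forall>i. p i \<noteq> p (Suc i)"
    "\<forall>i. open_segment (p i) (p (Suc i)) \<subseteq> interior S"
    "\<forall>i. billiard_bounce sides (p i) (p (Suc i)) (p (Suc (Suc i)))"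
    using assms(1) by (auto simp: periodic_billiard_def)
  then show ?thesis
    unfolding periodic_billiard_def using assms(2-5)
    by (intro exI[of _ "f \<circ> p"] exI[of _ n]) (auto simp: inj_eq image_mono, blast)
qed

lemma billiard_bounce_linear_image:
  fixes f :: "complex \<Rightarrow> complex"
  assumes "linear f" "0 < c" "\<And>v. norm (f v) = c * norm v"
    and "\<And>s v. f (reflect_dir s v) = reflect_dir (f s) (f v)"
    and "billiard_bounce sides p q r"
  shows "billiard_bounce ((\<lambda>(X, Y). (f X, f Y)) ` sides) (f p) (f q) (f r)"
proof -
  interpret linear f by fact
  have sgn_f: "sgn (f v) = (1 / c) *\<^sub>R f (sgn v)" for v
    using assms(2) by (simp add: sgn_div_norm assms(3) scale field_simps)
  obtain X Y where XY: "(X, Y) \<in> sides" "q \<in> open_segment X Y"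
    and law: "sgn (r - q) = reflect_dir (Y - X) (sgn (q - p))"
    using assms(5) by (auto simp: billiard_bounce_def)
  have "f q \<in> open_segment (f X) (f Y)"
  proof -
    from XY(2) obtain u where "X \<noteq> Y" "0 < u" "u < 1" "q = (1 - u) *\<^sub>R X + u *\<^sub>R Y"
      by (auto simp: in_segment)
    moreover from \<open>X \<noteq> Y\<close> have "f X \<noteq> f Y"
      using assms(2) assms(3)[of "X - Y"] by (auto simp: diff)
    ultimately show ?thesis by (auto simp: in_segment add scale)
  qed
  moreover have "sgn (f r - f q) = reflect_dir (f Y - f X) (sgn (f q - f p))"
    by (simp add: sgn_f law assms(4) reflect_dir_scaleR flip: diff)
  ultimately show ?thesis using XY(1) by (force simp: billiard_bounce_def)
qed

lemma periodic_billiard_linear_image: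
  fixes f :: "complex \<Rightarrow> complex"
  assumes "linear f" "0 < c" "\<And>v. norm (f v) = c * norm v"
    and "\<And>s v. f (reflect_dir s v) = reflect_dir (f s) (f v)"
    and "periodic_billiard S sides"
  shows "periodic_billiard (f ` S) ((\<lambda>(X, Y). (f X, f Y)) ` sides)"
proof (rule periodic_billiard_image[OF assms(5)])
  show "inj f"
    using assms(2,3) by (metis linear_injective_0[OF assms(1)] mult_eq_0_iff norm_eq_zero
        less_irrefl)
  then show "open_segment (f a) (f b) = f ` open_segment a b" for a b
    by (rule open_segment_linear_image[OF assms(1)])
  show "f ` interior S \<subseteq> interior (f ` S)"
    using interior_injective_linear_image[OF assms(1) \<open>inj f\<close>] by simp
qed (rule billiard_bounce_linear_image[OF assms(1-4)])

lemma periodic_billiard_translation: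
  assumes "periodic_billiard S sides"
  shows "periodic_billiard ((+) c ` S) ((\<lambda>(X, Y). (c + X, c + Y)) ` sides)"
proof (rule periodic_billiard_image[OF assms])
  show "open_segment (c + a) (c + b) = (+) c ` open_segment a b" for a b
    by (rule open_segment_translation)
  show "billiard_bounce ((\<lambda>(X, Y). (c + X, c + Y)) ` sides) (c + p) (c + q) (c + r)"
    if "billiard_bounce sides p q r" for p q r
    using that unfolding billiard_bounce_def open_segment_translation by force
qed (simp_all add: interior_translation)

lemma periodic_billiard_similarity:
  assumes "k \<noteq> 0" "periodic_billiard S sides"
  shows "periodic_billiard ((\<lambda>z. c + k * z) ` S) ((\<lambda>(X, Y). (c + k * X, c + k * Y)) ` sides)"
proof -
  have "periodic_billiard ((*) k ` S) ((\<lambda>(X, Y). (k * X, k * Y)) ` sides)"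
    using assms by (intro periodic_billiard_linear_image[of _ "cmod k"])
      (simp_all add: bounded_linear.linear[OF bounded_linear_mult_right] norm_mult reflect_dir_mult)
  from periodic_billiard_translation[OF this, of c] show ?thesis
    by (simp add: image_image case_prod_beta)
qed

lemma periodic_billiard_cnj:
  "periodic_billiard S sides \<Longrightarrow> periodic_billiard (cnj ` S) ((\<lambda>(X, Y). (cnj X, cnj Y)) ` sides)"
  by (rule periodic_billiard_linear_image[of _ 1]) (simp_all add: linear_cnj reflect_dir_cnj)

text \<open>A path meeting sides perpendicularly at both ends runs back along itself.\<close>
lemma periodic_billiard_retrace:
  assumes "P \<noteq> Q" "Q \<noteq> R" "R \<noteq> P'"
    and "open_segment P Q \<subseteq> interior S" "open_segment Q R \<subseteq> interior S"
      "open_segment R P' \<subseteq> interior S"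
    and "billiard_bounce sides Q P Q" "billiard_bounce sides P Q R"
      "billiard_bounce sides Q R P'" "billiard_bounce sides R P' R"
  shows "periodic_billiard S sides"
proof -
  define p where "p i = [P, Q, R, P', R, Q] ! (i mod 6)" for i
  have p_shift: "p (i + k) = [P, Q, R, P', R, Q] ! ((i mod 6 + k) mod 6)" for i k
    by (simp add: p_def mod_add_left_eq)
  have "p i \<noteq> p (Suc i) \<and> open_segment (p i) (p (Suc i)) \<subseteq> interior S \<and>
      billiard_bounce sides (p i) (p (Suc i)) (p (Suc (Suc i)))" for i
  proof -
    have "i mod 6 \<in> {0, 1, 2, 3, 4, 5}" by auto
    then show ?thesis
      using p_shift[of i 0] p_shift[of i 1] p_shift[of i 2] assms
        billiard_bounce_reverse[OF assms(8)] billiard_bounce_reverse[OF assms(9)]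
      by (auto simp: open_segment_commute)
  qed
  moreover have "p (i + 6) = p i" for i by (simp add: p_def)
  ultimately show ?thesis unfolding periodic_billiard_def by (intro exI[of _ p] exI[of _ 6]) auto
qed

section \<open>A periodic orbit at a right-angled corner\<close>

definition orient :: "complex \<Rightarrow> complex \<Rightarrow> complex \<Rightarrow> real" where
  "orient P Q V = cross (Q - P) (V - P)"

definition convex_quad :: "complex \<Rightarrow> complex \<Rightarrow> complex \<Rightarrow> complex \<Rightarrow> bool" where
  "convex_quad X Y Z W \<longleftrightarrow>
    0 < orient X Y Z \<and> 0 < orient X Y W \<and> 0 < orient Y Z W \<and> 0 < orient Y Z X \<and>
    0 < orient Z W X \<and> 0 < orient Z W Y \<and> 0 < orient W X Y \<and> 0 < orient W X Z"

definition open_quad :: "complex \<Rightarrow> complex \<Rightarrow> complex \<Rightarrow> complex \<Rightarrow> complex set" where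
  "open_quad X Y Z W = {p. 0 < orient X Y p \<and> 0 < orient Y Z p \<and> 0 < orient Z W p \<and> 0 < orient W X p}"

lemma orient_vertex [simp]: "orient P Q P = 0" "orient P Q Q = 0"
  by (simp_all add: orient_def cross_def algebra_simps)

lemma orient_similarity: "orient (c + k * P) (c + k * Q) (c + k * V) = (cmod k)\<^sup>2 * orient P Q V"
  by (simp only: cmod_power2) (simp add: orient_def cross_def algebra_simps power2_eq_square)

lemma orient_cnj: "orient (cnj P) (cnj Q) V = orient Q P (cnj V)"
  by (simp add: orient_def cross_def algebra_simps)

lemma orient_open_segment:
  assumes "p \<in> open_segment a b"
  obtains u where "0 < u" "u < 1" "orient E F p = (1 - u) * orient E F a + u * orient E F b"
proof -
  from assms obtain u where u: "0 < u" "u < 1" "p = (1 - u) *\<^sub>R a + u *\<^sub>R b"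
    by (auto simp: in_segment)
  have "orient E F ((1 - u) *\<^sub>R a + u *\<^sub>R b) = (1 - u) * orient E F a + u * orient E F b"
    by (simp add: orient_def cross_def algebra_simps)
  with u show ?thesis by (intro that[of u]) simp_all
qed

lemma orient_open_segment_pos:
  assumes "p \<in> open_segment a b" "0 \<le> orient E F a" "0 \<le> orient E F b"
    "0 < orient E F a + orient E F b"
  shows "0 < orient E F p"
proof -
  obtain u where u: "0 < u" "u < 1" "orient E F p = (1 - u) * orient E F a + u * orient E F b"
    using orient_open_segment[OF assms(1)] .
  consider "0 < orient E F a" | "0 < orient E F b" using assms(2-4) by linarith
  then show ?thesis
  proof cases
    case 1
    then have "0 < (1 - u) * orient E F a" using u by simp
    moreover have "0 \<le> u * orient E F b" using u assms(3) by simp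
    ultimately show ?thesis using u(3) by linarith
  next
    case 2
    then have "0 < u * orient E F b" using u by simp
    moreover have "0 \<le> (1 - u) * orient E F a" using u assms(2) by simp
    ultimately show ?thesis using u(3) by linarith
  qed
qed

lemma orient_open_side: "p \<in> open_segment E F \<Longrightarrow> orient E F p = 0"
  by (erule orient_open_segment[where E = E and F = F]) simp

lemma open_open_quad: "open (open_quad X Y Z W)"
proof -
  have "continuous_on UNIV (orient E F)" for E F
    unfolding orient_def cross_def by (intro continuous_intros)
  then have "open {p. 0 < orient E F p}" for E F
    by (intro open_Collect_less) (auto intro: continuous_intros)
  then show ?thesis
    unfolding open_quad_def Collect_conj_eq by (intro open_Int)
qed

lemma open_segment_subset_open_quad:
  assumes "\<And>E F. (E, F) \<in> {(X, Y), (Y, Z), (Z, W), (W, X)} \<Longrightarrow>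
      0 \<le> orient E F p \<and> 0 \<le> orient E F q \<and> 0 < orient E F p + orient E F q"
  shows "open_segment p q \<subseteq> open_quad X Y Z W"
  using assms by (auto simp: open_quad_def intro: orient_open_segment_pos)

lemma convex_quad_rotate: "convex_quad X Y Z W \<Longrightarrow> convex_quad Y Z W X"
  by (auto simp: convex_quad_def)

lemma open_quad_rotate: "open_quad X Y Z W = open_quad Y Z W X"
  by (auto simp: open_quad_def)

lemma right_corner_orbit_identities:
  fixes t h k :: real
  defines "L \<equiv> t\<^sup>2 + h\<^sup>2"
  defines "s \<equiv> t / L"
  defines "P \<equiv> Complex (1 - k * s * t) (k * s * h)"
    and "P' \<equiv> Complex (1 - (2 - k) * s * t) ((2 - k) * s * h)"
    and "Q \<equiv> Complex (1 - k) 0" and "R \<equiv> Complex 0 ((1 - k) * t / h)"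
  assumes "0 < h" "0 < k" "k < 1"
  shows "(P - Q) \<bullet> Complex (- t) h = 0" "(P' - R) \<bullet> Complex (- t) h = 0"
    "R - Q = ((1 - k) * L / (k * h\<^sup>2)) *\<^sub>R cnj (Q - P)"
    "P' - R = ((1 - (2 - k) * s * t) / (1 - k)) *\<^sub>R - cnj (R - Q)"
proof -
  have "0 < L" using assms(7) by (simp add: L_def add_nonneg_pos)
  then show "(P - Q) \<bullet> Complex (- t) h = 0" "(P' - R) \<bullet> Complex (- t) h = 0"
    "R - Q = ((1 - k) * L / (k * h\<^sup>2)) *\<^sub>R cnj (Q - P)"
    "P' - R = ((1 - (2 - k) * s * t) / (1 - k)) *\<^sub>R - cnj (R - Q)"
    using assms(7-9)
    by (simp_all add: s_def P_def P'_def Q_def R_def inner_complex_def complex_eq_iff field_simps)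
      (simp_all add: L_def, algebra+)
qed

lemma in_open_segment: "a \<noteq> b \<Longrightarrow> 0 < u \<Longrightarrow> u < 1 \<Longrightarrow> (1 - u) *\<^sub>R a + u *\<^sub>R b \<in> open_segment a b"
  by (auto simp: in_segment)

lemma orbit_normal_frame:
  fixes Z W :: complex
  assumes "Re W = 0" "0 < Im W" "0 < Re Z" "0 < Im Z" "Re Z < 1" "Re Z < (Re Z)\<^sup>2 + (Im Z)\<^sup>2"
  obtains P Q R P' where
    "P \<in> open_segment 1 Z" "Q \<in> open_segment 0 1" "R \<in> open_segment W 0" "P' \<in> open_segment 1 Z"
    "P \<noteq> Q" "Q \<noteq> R" "R \<noteq> P'"
    "(P - Q) \<bullet> (Z - 1) = 0" "(P' - R) \<bullet> (Z - 1) = 0"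
    "sgn (R - Q) = reflect_dir (1 - 0) (sgn (Q - P))"
    "sgn (P' - R) = reflect_dir (0 - W) (sgn (R - Q))"
proof -
  define t h a where "t = 1 - Re Z" and "h = Im Z" and "a = Im W"
  define L where "L = t\<^sup>2 + h\<^sup>2"
  define s where "s = t / L"
  have Z: "Z = Complex (1 - t) h" and W: "W = Complex 0 a"
    using assms(1) by (simp_all add: t_def h_def a_def complex_eq_iff)
  have pos: "0 < t" "t < 1" "0 < h" "0 < a" "0 < L"
    using assms(2-5) by (simp_all add: t_def h_def a_def L_def add_nonneg_pos)
  have "t < L"
    using assms(6) by (simp add: t_def h_def L_def power2_eq_square algebra_simps)
  then have s: "0 < s" "s < 1" using pos by (simp_all add: s_def)
  txt \<open>The foot of the perpendicular from 0 to the line through 1 and Z is \<open>1 + s (Z - 1)\<close>.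
    The orbit is symmetric about the line through 0 and this foot and meets the side 1 Z at
    the parameters \<open>k s\<close> and \<open>(2 - k) s\<close>; the lower bounds on k keep the second one below 1
    and the bounce point R below W.\<close>
  obtain k where k: "max 0 (max (2 - L / t) (1 - a * h / t)) < k" "k < 1"
  proof -
    have "max 0 (max (2 - L / t) (1 - a * h / t)) < 1"
      using \<open>t < L\<close> pos by (auto simp: field_simps)
    then show ?thesis using dense that by blast
  qed
  then have k0: "0 < k" and k1: "(2 - k) * s < 1" and k2: "(1 - k) * t / (h * a) < 1"
    using pos by (auto simp: s_def field_simps)
  have m: "0 < 1 - (2 - k) * s * t"
  proof -
    have "(2 - k) * s * t < 1 * 1" using k1 k(2) s pos by (intro mult_strict_mono) auto
    then show ?thesis by simp
  qed
  define uP uP' uQ uR where "uP = k * s" and "uP' = (2 - k) * s" and "uQ = 1 - k"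
    and "uR = 1 - (1 - k) * t / (h * a)"
  have "k * s < 1 * 1" using k(2) s by (intro mult_strict_mono) auto
  then have weights: "0 < uP" "uP < 1" "0 < uP'" "uP' < 1" "0 < uQ" "uQ < 1" "0 < uR" "uR < 1"
    using k k0 k1 k2 s pos unfolding uP_def uP'_def uQ_def uR_def by auto
  define P where "P = (1 - uP) *\<^sub>R 1 + uP *\<^sub>R Z"
  define P' where "P' = (1 - uP') *\<^sub>R 1 + uP' *\<^sub>R Z"
  define Q where "Q = (1 - uQ) *\<^sub>R 0 + uQ *\<^sub>R (1::complex)"
  define R where "R = (1 - uR) *\<^sub>R W + uR *\<^sub>R (0::complex)"
  have coords: "P = Complex (1 - k * s * t) (k * s * h)"
    "P' = Complex (1 - (2 - k) * s * t) ((2 - k) * s * h)"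
    "Q = Complex (1 - k) 0" "R = Complex 0 ((1 - k) * t / h)"
    using pos by (simp_all add: P_def P'_def Q_def R_def uP_def uP'_def uQ_def uR_def Z W
        complex_eq_iff field_simps)
  note identities =
    right_corner_orbit_identities[of h k t, OF pos(3) k0 k(2), folded L_def s_def, folded coords]
  have "R - Q = ((1 - k) * L / (k * h\<^sup>2)) *\<^sub>R reflect_dir (1 - 0) (Q - P)"
    using identities(3) by (simp add: reflect_dir_one)
  then have law_Q: "sgn (R - Q) = reflect_dir (1 - 0) (sgn (Q - P))"
    by (rule sgn_reflect_dir[rotated 2]) (use pos k0 k(2) in simp_all)
  have "P' - R = ((1 - (2 - k) * s * t) / (1 - k)) *\<^sub>R reflect_dir (0 - W) (R - Q)"
    using identities(4) pos by (simp add: reflect_dir_imaginary W complex_eq_iff)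
  then have law_R: "sgn (P' - R) = reflect_dir (0 - W) (sgn (R - Q))"
    by (rule sgn_reflect_dir[rotated 2]) (use pos k(2) m in \<open>simp_all add: W complex_eq_iff\<close>)
  have "Z - 1 = Complex (- t) h" by (simp add: Z complex_eq_iff)
  then have "(P - Q) \<bullet> (Z - 1) = 0" "(P' - R) \<bullet> (Z - 1) = 0"
    using identities(1,2) by simp_all
  moreover have "1 \<noteq> Z" "W \<noteq> 0" using pos by (simp_all add: Z W complex_eq_iff)
  then have "P \<in> open_segment 1 Z" "Q \<in> open_segment 0 1" "R \<in> open_segment W 0"
      "P' \<in> open_segment 1 Z"
    using weights unfolding P_def P'_def Q_def R_def by (metis in_open_segment zero_neq_one)+
  moreover have "P \<noteq> Q" "Q \<noteq> R" "R \<noteq> P'"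
    using k0 k(2) s pos m by (auto simp: coords complex_eq_iff)
  ultimately show ?thesis using law_Q law_R by (blast intro: that)
qed

lemma periodic_billiard_normal_frame:
  assumes convex: "convex_quad 0 1 Z W"
    and right: "(1 - 0) \<bullet> (W - 0) = 0" and acute: "0 < (Z - 1) \<bullet> (0 - 1)"
    and foot: "0 < (Z - 1) \<bullet> (Z - 0)" and S: "open_quad 0 1 Z W \<subseteq> S"
  shows "periodic_billiard S {(0, 1), (1, Z), (W, 0)}"
proof -
  have vertices: "0 < orient 0 1 Z" "0 < orient 0 1 W" "0 < orient 1 Z W" "0 < orient 1 Z 0"
      "0 < orient Z W 0" "0 < orient Z W 1" "0 < orient W 0 1" "0 < orient W 0 Z"
    using convex by (simp_all add: convex_quad_def)
  have "Re W = 0" using right by (simp add: inner_complex_def)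
  moreover from this have "0 < Im W" "0 < Re Z" "0 < Im Z"
    using vertices(2,8,1) by (simp_all add: orient_def cross_def zero_less_mult_iff)
  moreover have "Re Z < 1" "Re Z < (Re Z)\<^sup>2 + (Im Z)\<^sup>2"
    using acute foot by (simp_all add: inner_complex_def power2_eq_square algebra_simps)
  ultimately obtain P Q R P' where mem: "P \<in> open_segment 1 Z" "Q \<in> open_segment 0 1"
      "R \<in> open_segment W 0" "P' \<in> open_segment 1 Z"
    and distinct: "P \<noteq> Q" "Q \<noteq> R" "R \<noteq> P'"
    and orthogonal: "(P - Q) \<bullet> (Z - 1) = 0" "(P' - R) \<bullet> (Z - 1) = 0"
    and law: "sgn (R - Q) = reflect_dir (1 - 0) (sgn (Q - P))"
      "sgn (P' - R) = reflect_dir (0 - W) (sgn (R - Q))"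
    by (rule orbit_normal_frame)
  have signs: "0 < orient 0 1 P" "orient 1 Z P = 0" "0 < orient Z W P" "0 < orient W 0 P"
      "orient 0 1 Q = 0" "0 < orient 1 Z Q" "0 < orient Z W Q" "0 < orient W 0 Q"
      "0 < orient 0 1 R" "0 < orient 1 Z R" "0 < orient Z W R" "orient W 0 R = 0"
      "0 < orient 0 1 P'" "orient 1 Z P' = 0" "0 < orient Z W P'" "0 < orient W 0 P'"
    using vertices by (auto intro: orient_open_segment_pos[OF mem(1)] orient_open_segment_pos[OF mem(2)]
        orient_open_segment_pos[OF mem(3)] orient_open_segment_pos[OF mem(4)]
        orient_open_side[OF mem(1)] orient_open_side[OF mem(2)] orient_open_side[OF mem(3)]
        orient_open_side[OF mem(4)])
  have "open_segment P Q \<subseteq> open_quad 0 1 Z W" "open_segment Q R \<subseteq> open_quad 0 1 Z W"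
    "open_segment R P' \<subseteq> open_quad 0 1 Z W"
    using signs by (auto intro!: open_segment_subset_open_quad)
  then have "open_segment P Q \<subseteq> interior S" "open_segment Q R \<subseteq> interior S"
    "open_segment R P' \<subseteq> interior S"
    using interior_maximal[OF S open_open_quad] by blast+
  moreover have "billiard_bounce {(0, 1), (1, Z), (W, 0)} Q P Q"
    "billiard_bounce {(0, 1), (1, Z), (W, 0)} R P' R"
    using mem orthogonal by (auto intro: billiard_bounce_orthogonal)
  moreover have "billiard_bounce {(0, 1), (1, Z), (W, 0)} P Q R"
    "billiard_bounce {(0, 1), (1, Z), (W, 0)} Q R P'"
    using mem law by (auto simp: billiard_bounce_def)
  ultimately show ?thesis using distinct by (intro periodic_billiard_retrace)
qed

lemma inner_similarity:
  "((c + k * a) - (c + k * b)) \<bullet> ((c + k * d) - (c + k * e)) = (cmod k)\<^sup>2 * ((a - b) \<bullet> (d - e))"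
  by (simp add: inner_mult_both flip: right_diff_distrib)

lemma convex_quad_similarity:
  "k \<noteq> 0 \<Longrightarrow> convex_quad (c + k * X) (c + k * Y) (c + k * Z) (c + k * W) \<longleftrightarrow> convex_quad X Y Z W"
  by (simp add: convex_quad_def orient_similarity zero_less_mult_iff)

lemma open_quad_similarity:
  "k \<noteq> 0 \<Longrightarrow> c + k * p \<in> open_quad (c + k * X) (c + k * Y) (c + k * Z) (c + k * W) \<longleftrightarrow>
    p \<in> open_quad X Y Z W"
  by (simp add: open_quad_def orient_similarity zero_less_mult_iff)

lemma periodic_billiard_right_angle:
  assumes convex: "convex_quad X Y Z W"
    and right: "(Y - X) \<bullet> (W - X) = 0" and acute: "0 < (Z - Y) \<bullet> (X - Y)"
    and foot: "0 < (Z - Y) \<bullet> (Z - X)" and S: "open_quad X Y Z W \<subseteq> S"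
  shows "periodic_billiard S {(X, Y), (Y, Z), (W, X)}"
proof -
  define k where "k = Y - X"
  have "k \<noteq> 0" using convex by (auto simp: convex_quad_def k_def)
  define f where "f z = X + k * z" for z
  define Z' W' where "Z' = (Z - X) / k" and "W' = (W - X) / k"
  have vertices: "f 0 = X" "f 1 = Y" "f Z' = Z" "f W' = W"
    using \<open>k \<noteq> 0\<close> by (simp_all add: f_def k_def Z'_def W'_def)
  have "periodic_billiard (f -` S) {(0, 1), (1, Z'), (W', 0)}"
  proof (rule periodic_billiard_normal_frame)
    show "convex_quad 0 1 Z' W'"
      using convex convex_quad_similarity[OF \<open>k \<noteq> 0\<close>, of X 0 1 Z' W']
      by (simp add: vertices[unfolded f_def, simplified])
    have "(f a - f b) \<bullet> (f d - f e) = (cmod k)\<^sup>2 * ((a - b) \<bullet> (d - e))" for a b d e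
      unfolding f_def by (rule inner_similarity)
    then show "(1 - 0) \<bullet> (W' - 0) = 0" "0 < (Z' - 1) \<bullet> (0 - 1)" "0 < (Z' - 1) \<bullet> (Z' - 0)"
      using right acute foot \<open>k \<noteq> 0\<close> unfolding vertices[symmetric]
      by (simp_all add: zero_less_mult_iff)
    show "open_quad 0 1 Z' W' \<subseteq> f -` S"
    proof
      fix p assume "p \<in> open_quad 0 1 Z' W'"
      then have "f p \<in> open_quad X Y Z W"
        using open_quad_similarity[OF \<open>k \<noteq> 0\<close>, of X p 0 1 Z' W']
        by (simp add: vertices[unfolded f_def, simplified] f_def)
      then show "p \<in> f -` S" using S by auto
    qed
  qed
  from periodic_billiard_similarity[OF \<open>k \<noteq> 0\<close> this, of X]
  have "periodic_billiard (f ` f -` S) ((\<lambda>(a, b). (f a, f b)) ` {(0, 1), (1, Z'), (W', 0)})"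
    by (simp add: f_def [abs_def])
  moreover have "surj f"
    using \<open>k \<noteq> 0\<close> by (intro surjI[of _ "\<lambda>z. (z - X) / k"]) (simp add: f_def)
  ultimately show ?thesis by (simp add: vertices surj_image_vimage_eq)
qed

lemma periodic_billiard_right_angle_cw:
  assumes convex: "convex_quad X W Z Y"
    and right: "(Y - X) \<bullet> (W - X) = 0" and acute: "0 < (Z - Y) \<bullet> (X - Y)"
    and foot: "0 < (Z - Y) \<bullet> (Z - X)" and S: "open_quad X W Z Y \<subseteq> S"
  shows "periodic_billiard S {(X, Y), (Y, Z), (W, X)}"
proof -
  have "periodic_billiard (cnj ` S) {(cnj X, cnj Y), (cnj Y, cnj Z), (cnj W, cnj X)}"
  proof (rule periodic_billiard_right_angle)
    show "convex_quad (cnj X) (cnj Y) (cnj Z) (cnj W)"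
      using convex by (simp add: convex_quad_def orient_cnj)
    show "(cnj Y - cnj X) \<bullet> (cnj W - cnj X) = 0" "0 < (cnj Z - cnj Y) \<bullet> (cnj X - cnj Y)"
      "0 < (cnj Z - cnj Y) \<bullet> (cnj Z - cnj X)"
      using right acute foot by (simp_all add: inner_cnj flip: complex_cnj_diff)
    show "open_quad (cnj X) (cnj Y) (cnj Z) (cnj W) \<subseteq> cnj ` S"
    proof
      fix p assume "p \<in> open_quad (cnj X) (cnj Y) (cnj Z) (cnj W)"
      then have "cnj p \<in> open_quad X W Z Y"
        by (simp add: open_quad_def orient_cnj)
      then show "p \<in> cnj ` S" using S by (metis complex_cnj_cnj image_eqI subsetD)
    qed
  qed
  from periodic_billiard_cnj[OF this] show ?thesis by (simp add: image_image)
qed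

section \<open>Angles between vectors\<close>

lemma vang_cos_bound: "\<bar>(u \<bullet> v) / (norm u * norm v)\<bar> \<le> 1"
proof (cases "u = 0 \<or> v = 0")
  case False
  then show ?thesis using Cauchy_Schwarz_ineq2[of u v] by (simp add: abs_divide divide_le_eq_1)
qed auto

lemma cos_vang: "cos (vang u v) = (u \<bullet> v) / (norm u * norm v)"
  unfolding vang_def using vang_cos_bound by (rule cos_arccos_abs)

lemma vang_bounds: "0 \<le> vang u v" "vang u v \<le> pi"
  using vang_cos_bound[of u v] unfolding vang_def abs_le_iff by (auto intro: arccos_lbound arccos_ubound)

lemma vang_commute: "vang u v = vang v u"
  by (simp add: vang_def inner_commute mult.commute)

lemma vang_minus: "vang (- u) (- v) = vang u v"
  by (simp add: vang_def)

lemma vang_cnj: "vang (cnj u) (cnj v) = vang u v"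
  by (simp add: vang_def inner_cnj)

lemma vang_mult: "k \<noteq> 0 \<Longrightarrow> vang (k * u) (k * v) = vang u v"
  by (simp add: vang_def inner_mult_both norm_mult power2_eq_square)

lemma vang_right: "vang u v = pi / 2 \<Longrightarrow> u \<bullet> v = 0"
proof -
  assume right: "vang u v = pi / 2"
  have "cos (vang u v) = 0" unfolding right by simp
  then show ?thesis by (cases "u = 0 \<or> v = 0") (auto simp: cos_vang)
qed

lemma vang_acute: "vang u v < pi / 2 \<Longrightarrow> 0 < u \<bullet> v"
proof -
  assume "vang u v < pi / 2"
  then have "0 < cos (vang u v)" using vang_bounds(1)[of u v] by (intro cos_gt_zero_pi) auto
  then show ?thesis
    by (auto simp: cos_vang zero_less_divide_iff) (metis norm_ge_zero zero_le_mult_iff not_le)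
qed

lemma sin_vang_one: "z \<noteq> 0 \<Longrightarrow> sin (vang z 1) = \<bar>Im z\<bar> / cmod z"
proof -
  assume "z \<noteq> 0"
  have "1 - (Re z / cmod z)\<^sup>2 = (Im z / cmod z)\<^sup>2"
    using \<open>z \<noteq> 0\<close> by (simp add: power_divide field_simps) (simp add: cmod_power2)
  then show ?thesis
    using vang_cos_bound[of z 1] by (simp add: vang_def sin_arccos_abs real_sqrt_abs)
qed

lemma vang_add:
  assumes "u \<noteq> 0" "v \<noteq> 0" "0 \<le> Im u" "Im v \<le> 0" "vang u 1 + vang v 1 \<le> pi"
  shows "vang u 1 + vang v 1 = vang u v"
proof (rule cos_inj_pi)
  have "cos (vang u 1 + vang v 1) = (Re u * Re v + Im u * Im v) / (cmod u * cmod v)"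
    using assms(1-4) by (simp add: cos_add cos_vang sin_vang_one abs_of_nonneg abs_of_nonpos
        diff_divide_distrib add_divide_distrib)
  then show "cos (vang u 1 + vang v 1) = cos (vang u v)"
    by (simp add: cos_vang inner_complex_def)
qed (use assms(5) vang_bounds in \<open>auto intro: add_nonneg_nonneg\<close>)

section \<open>Near-square quadrilaterals with diagonal from 0 to 1\<close>

text \<open>The direction of z makes an angle strictly between \<pi>/6 and \<pi>/3 with the positive real
  axis.\<close>
definition near_diagonal :: "complex \<Rightarrow> bool" where
  "near_diagonal z \<longleftrightarrow> 0 < Re z \<and> (Im z)\<^sup>2 < 3 * (Re z)\<^sup>2 \<and> (Re z)\<^sup>2 < 3 * (Im z)\<^sup>2"

lemma near_diagonal_vang:
  assumes "\<bar>vang z 1 - pi / 4\<bar> < pi / 12"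
  shows "near_diagonal z"
proof -
  have angle: "pi / 6 < vang z 1" "vang z 1 < pi / 3" using assms unfolding abs_less_iff by linarith+
  have "cos (vang z 1) < cos (pi / 6)"
    using angle vang_bounds[of z 1] by (subst cos_mono_less_eq) auto
  moreover have "cos (pi / 3) < cos (vang z 1)"
    using angle vang_bounds[of z 1] by (subst cos_mono_less_eq) auto
  ultimately have cos: "Re z / cmod z < sqrt 3 / 2" "1 / 2 < Re z / cmod z"
    by (simp_all add: cos_vang cos_30 cos_60)
  then have "0 < cmod z" by (cases "z = 0") auto
  then have upper: "cmod z < 2 * Re z" and lower: "2 * Re z < sqrt 3 * cmod z"
    using cos by (simp_all add: field_simps)
  have "(cmod z)\<^sup>2 < (2 * Re z)\<^sup>2" "(2 * Re z)\<^sup>2 < (sqrt 3 * cmod z)\<^sup>2"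
    using upper lower \<open>0 < cmod z\<close> by (simp_all only: power_strict_mono norm_ge_zero)
  moreover have "0 < Re z" using upper \<open>0 < cmod z\<close> by linarith
  ultimately show ?thesis by (simp add: near_diagonal_def cmod_power2 power_mult_distrib)
qed

text \<open>The angle at d of the triangle 0 d b is acute. When the angle at 0 is acute too, the foot
  of the perpendicular from b to the line 0 d therefore lies strictly between 0 and d.\<close>
lemma foot_between:
  assumes near: "near_diagonal b" "near_diagonal (1 - b)" "near_diagonal d" "near_diagonal (1 - d)"
    and "0 < Im b" "Im d < 0" and right: "(0 - b) \<bullet> (1 - b) = 0"
  shows "0 < d \<bullet> (d - b)"
proof -
  define x y x' y' where "x = Re b" and "y = Im b" and "x' = Re d" and "y' = - Im d"
  have pos: "0 < y" "0 < y'" "0 < x'" "0 < 1 - x"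
    using assms(5,6) near(2,3) by (simp_all add: x_def y_def x'_def y'_def near_diagonal_def)
  have bounds: "x\<^sup>2 < 3 * y\<^sup>2" "y\<^sup>2 < 3 * (1 - x)\<^sup>2" "x'\<^sup>2 < 3 * y'\<^sup>2" "(1 - x')\<^sup>2 < 3 * y'\<^sup>2"
    using near by (simp_all add: near_diagonal_def x_def y_def x'_def y'_def)
  have circle: "y\<^sup>2 = x * (1 - x)"
    using right by (simp add: x_def y_def inner_complex_def power2_eq_square algebra_simps)
  have "x * (1 - x) < (3 * (1 - x)) * (1 - x)"
    using bounds(2) circle by (simp only: power2_eq_square mult.assoc)
  then have "4 * x < 3" using pos(4) by simp
  have "(x * x')\<^sup>2 < (3 * (y * y'))\<^sup>2"
  proof -
    have "(x * x')\<^sup>2 = x\<^sup>2 * x'\<^sup>2" by (simp add: power_mult_distrib)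
    also have "\<dots> < (3 * y\<^sup>2) * (3 * y'\<^sup>2)"
      using bounds(1,3) pos(3) by (intro mult_strict_mono) auto
    also have "\<dots> = (3 * (y * y'))\<^sup>2" by (simp add: power_mult_distrib)
    finally show ?thesis .
  qed
  then have "x * x' < 3 * (y * y')"
    by (rule power_less_imp_less_base) (use pos in simp)
  then have "x * x' - y * y' < (2 / 3) * (x * x')" by linarith
  also have "\<dots> \<le> x' / 2" using \<open>4 * x < 3\<close> pos(3) by (simp add: mult_right_mono)
  also have "\<dots> < x'\<^sup>2 + (1 - x')\<^sup>2 / 3"
  proof -
    have "0 < 4 * (x' - 7/16)\<^sup>2 + 15 / 64" by (simp add: add_nonneg_pos)
    then show ?thesis by (simp add: power2_eq_square algebra_simps field_simps)
  qed
  also have "\<dots> < x'\<^sup>2 + y'\<^sup>2" using bounds(4) by simp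
  finally show ?thesis
    by (simp add: x_def y_def x'_def y'_def inner_complex_def power2_eq_square algebra_simps)
qed

context
  fixes b d :: complex
  assumes Im_b: "0 < Im b" and Im_d: "Im d < 0" and near: "near_square (pi / 12) 0 b 1 d"
begin

lemma quad_params_normal: "quad_params 0 b 1 d = [vang b 1, vang (1 - b) 1, vang (1 - d) 1, vang d 1]"
  using vang_minus[of "1 - b" 1] vang_minus[of "1 - d" 1] by (simp add: quad_params_def)

lemma near_diagonal_normal:
  "near_diagonal b" "near_diagonal (1 - b)" "near_diagonal (1 - d)" "near_diagonal d"
  using near by (simp_all add: near_square_def quad_params_normal near_diagonal_vang)

lemma Re_normal: "0 < Re b" "Re b < 1" "0 < Re d" "Re d < 1"
  using near_diagonal_normal by (simp_all add: near_diagonal_def)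

lemma interior_angles_normal:
  "interior_angles 0 b 1 d = [vang b d, vang (0 - b) (1 - b), vang (b - 1) (d - 1), vang (0 - d) (1 - d)]"
proof -
  have "a < pi / 3" if "a \<in> set (quad_params 0 b 1 d)" for a
    using near that unfolding near_square_def abs_less_iff by fastforce
  then have small: "vang b 1 < pi / 3" "vang (1 - b) 1 < pi / 3" "vang (1 - d) 1 < pi / 3"
      "vang d 1 < pi / 3"
    by (simp_all add: quad_params_normal)
  have "vang b 1 + vang d 1 \<le> pi" "vang (1 - d) 1 + vang (1 - b) 1 \<le> pi"
    using small pi_ge_zero by linarith+
  then have A: "vang b 1 + vang d 1 = vang b d"
    and C: "vang (1 - d) 1 + vang (1 - b) 1 = vang (1 - d) (1 - b)"
    using Im_b Im_d by (auto intro!: vang_add)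
  have "vang (1 - d) (1 - b) = vang (b - 1) (d - 1)"
    using vang_minus[of "b - 1" "d - 1"] vang_commute[of "1 - d"] by simp
  with A C show ?thesis
    using quad_params_normal by (simp add: interior_angles_def quad_params_def)
qed

lemma convex_quad_normal: "convex_quad 0 d 1 b"
proof -
  have "0 < Re d * Im b" "Im d * Re b < 0" "0 < (1 - Re d) * Im b" "Im d * (1 - Re b) < 0"
    using Im_b Im_d Re_normal by (simp_all add: mult_neg_pos)
  then have "0 < Re d * Im b - Im d * Re b" "0 < (1 - Re d) * Im b - Im d * (1 - Re b)"
    by linarith+
  then show ?thesis using Im_b Im_d Re_normal
    by (simp add: convex_quad_def orient_def cross_def algebra_simps)
qed

lemma open_quad_normal: "open_quad 0 d 1 b \<subseteq> quad_region 0 b 1 d"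
proof
  fix p assume "p \<in> open_quad 0 d 1 b"
  then have sides: "0 < Re d * Im p - Im d * Re p" "0 < (1 - Re d) * Im p - Im d * (1 - Re p)"
      "0 < Im b * (1 - Re p) + (Re b - 1) * Im p" "0 < Im b * Re p - Re b * Im p"
    by (simp_all add: open_quad_def orient_def cross_def algebra_simps)
  show "p \<in> quad_region 0 b 1 d"
  proof (cases "0 \<le> Im p")
    case True
    define v w where "v = Im p / Im b" and "w = (Im b * Re p - Re b * Im p) / Im b"
    have "p = (1 - v - w) *\<^sub>R 0 + v *\<^sub>R b + w *\<^sub>R 1"
      using Im_b by (simp add: complex_eq_iff v_def w_def field_simps)
    moreover have "1 - v - w = (Im b * (1 - Re p) + (Re b - 1) * Im p) / Im b"
      using Im_b by (simp add: v_def w_def field_simps)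
    then have "0 \<le> 1 - v - w" "0 \<le> v" "0 \<le> w"
      using Im_b True sides(3,4) by (simp_all add: v_def w_def)
    ultimately have "p \<in> convex hull {0, b, 1}"
      unfolding convex_hull_3 by (intro CollectI exI[of _ "1 - v - w"] exI[of _ v] exI[of _ w]) auto
    then show ?thesis by (simp add: quad_region_def)
  next
    case False
    define v w where "v = (Re d * Im p - Im d * Re p) / - Im d" and "w = Im p / Im d"
    have "p = (1 - v - w) *\<^sub>R 0 + v *\<^sub>R 1 + w *\<^sub>R d"
      using Im_d by (simp add: complex_eq_iff v_def w_def field_simps)
    moreover have "1 - v - w = ((1 - Re d) * Im p - Im d * (1 - Re p)) / - Im d"
      using Im_d by (simp add: v_def w_def field_simps)
    then have "0 \<le> 1 - v - w" "0 \<le> v" "0 \<le> w"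
      using Im_d False sides(1,2) by (simp_all add: v_def w_def divide_nonpos_neg divide_nonneg_neg)
    ultimately have "p \<in> convex hull {0, 1, d}"
      unfolding convex_hull_3 by (intro CollectI exI[of _ "1 - v - w"] exI[of _ v] exI[of _ w]) auto
    then show ?thesis by (simp add: quad_region_def)
  qed
qed

text \<open>The quadruple runs over the corners of the counterclockwise quadrilateral 0 d 1 b,
  traversed in either direction from the right-angled vertex X towards the acute vertex Y.\<close>
lemma periodic_billiard_corner:
  assumes corner: "(X, Y, Z, W) \<in> {(0, d, 1, b), (d, 1, b, 0), (1, b, 0, d), (b, 0, d, 1)} \<or>
      (X, W, Z, Y) \<in> {(0, d, 1, b), (d, 1, b, 0), (1, b, 0, d), (b, 0, d, 1)}"
    and right: "(Y - X) \<bullet> (W - X) = 0" and acute: "0 < (Z - Y) \<bullet> (X - Y)"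
    and foot: "0 < (Z - Y) \<bullet> (Z - X)"
  shows "has_periodic_billiard_path 0 b 1 d"
proof -
  have rotations: "convex_quad P1 P2 P3 P4 \<and> open_quad P1 P2 P3 P4 \<subseteq> quad_region 0 b 1 d"
    if "(P1, P2, P3, P4) \<in> {(0, d, 1, b), (d, 1, b, 0), (1, b, 0, d), (b, 0, d, 1)}" for P1 P2 P3 P4
    using that convex_quad_normal convex_quad_rotate[OF convex_quad_normal]
      convex_quad_rotate[OF convex_quad_rotate[OF convex_quad_normal]]
      convex_quad_rotate[OF convex_quad_rotate[OF convex_quad_rotate[OF convex_quad_normal]]]
      open_quad_normal
    by (auto simp: open_quad_rotate[of 0] open_quad_rotate[of d] open_quad_rotate[of 1])
  from corner have "periodic_billiard (quad_region 0 b 1 d) {(X, Y), (Y, Z), (W, X)}"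
  proof (elim disjE)
    assume "(X, Y, Z, W) \<in> {(0, d, 1, b), (d, 1, b, 0), (1, b, 0, d), (b, 0, d, 1)}"
    then show ?thesis
      using rotations right acute foot by (intro periodic_billiard_right_angle) blast+
  next
    assume "(X, W, Z, Y) \<in> {(0, d, 1, b), (d, 1, b, 0), (1, b, 0, d), (b, 0, d, 1)}"
    then show ?thesis
      using rotations right acute foot by (intro periodic_billiard_right_angle_cw) blast+
  qed
  moreover have "\<forall>(E, F) \<in> {(X, Y), (Y, Z), (W, X)}.
      (E, F) \<in> quad_sides 0 b 1 d \<or> (F, E) \<in> quad_sides 0 b 1 d"
    using corner by (auto simp: quad_sides_def)
  ultimately show ?thesis
    by (simp add: has_periodic_billiard_path_iff periodic_billiard_flip_sides)
qed

text \<open>The last three cases are the first one transported by the symmetries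
  \<open>z \<mapsto> 1 - cnj z\<close> and \<open>z \<mapsto> cnj z\<close> (with \<open>b\<close> and \<open>d\<close> exchanged) of the normal form.\<close>
lemma foot_between_normal:
  "(0 - b) \<bullet> (1 - b) = 0 \<Longrightarrow> 0 < (d - 0) \<bullet> (d - b)"
  "(0 - b) \<bullet> (1 - b) = 0 \<Longrightarrow> 0 < (d - 1) \<bullet> (d - b)"
  "(0 - d) \<bullet> (1 - d) = 0 \<Longrightarrow> 0 < (b - 0) \<bullet> (b - d)"
  "(0 - d) \<bullet> (1 - d) = 0 \<Longrightarrow> 0 < (b - 1) \<bullet> (b - d)"
  using foot_between[of b d] foot_between[of "1 - cnj b" "1 - cnj d"]
    foot_between[of "cnj d" "cnj b"] foot_between[of "1 - d" "1 - b"]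
    near_diagonal_normal Im_b Im_d
  by (simp_all add: near_diagonal_def inner_complex_def algebra_simps)

lemma has_periodic_billiard_path_normal:
  assumes "right_adj_acute 0 b 1 d"
  shows "has_periodic_billiard_path 0 b 1 d"
proof -
  define A B C D where "A = vang b d" and "B = vang (0 - b) (1 - b)"
    and "C = vang (b - 1) (d - 1)" and "D = vang (0 - d) (1 - d)"
  obtain i where i: "i < 4" and angles: "let x = [A, B, C, D] ! i; y = [A, B, C, D] ! ((i + 1) mod 4)
      in (x = pi / 2 \<and> y < pi / 2) \<or> (y = pi / 2 \<and> x < pi / 2)"
    using assms by (auto simp: right_adj_acute_def interior_angles_normal A_def B_def C_def D_def)
  from i have "i = 0 \<or> i = 1 \<or> i = 2 \<or> i = 3" by auto
  then consider
      "A = pi / 2" "B < pi / 2" | "A = pi / 2" "D < pi / 2" | "B = pi / 2" "A < pi / 2"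
    | "B = pi / 2" "C < pi / 2" | "C = pi / 2" "B < pi / 2" | "C = pi / 2" "D < pi / 2"
    | "D = pi / 2" "C < pi / 2" | "D = pi / 2" "A < pi / 2"
    using angles by (elim disjE) (auto simp: Let_def)
  then show ?thesis
  proof cases
    case 1
    then show ?thesis
      using vang_right[of b d] vang_acute[of "0 - b" "1 - b"] Re_normal unfolding A_def B_def
      by (intro periodic_billiard_corner[of 0 b 1 d]) (simp_all add: inner_commute)
  next
    case 2
    then show ?thesis
      using vang_right[of b d] vang_acute[of "0 - d" "1 - d"] Re_normal unfolding A_def D_def
      by (intro periodic_billiard_corner[of 0 d 1 b]) (simp_all add: inner_commute)
  next
    case 3
    then show ?thesis
      using vang_right[of "0 - b" "1 - b"] vang_acute[of b d] foot_between_normal(1)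
      unfolding A_def B_def
      by (intro periodic_billiard_corner[of b 0 d 1]) (simp_all add: inner_commute)
  next
    case 4
    then show ?thesis
      using vang_right[of "0 - b" "1 - b"] vang_acute[of "b - 1" "d - 1"] foot_between_normal(2)
      unfolding B_def C_def
      by (intro periodic_billiard_corner[of b 1 d 0]) (simp_all add: inner_commute)
  next
    case 5
    then show ?thesis
      using vang_right[of "b - 1" "d - 1"] vang_acute[of "0 - b" "1 - b"] Re_normal
      unfolding B_def C_def
      by (intro periodic_billiard_corner[of 1 b 0 d]) (simp_all add: inner_commute)
  next
    case 6
    then show ?thesis
      using vang_right[of "b - 1" "d - 1"] vang_acute[of "0 - d" "1 - d"] Re_normal
      unfolding C_def D_def
      by (intro periodic_billiard_corner[of 1 d 0 b]) (simp_all add: inner_commute)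
  next
    case 7
    then show ?thesis
      using vang_right[of "0 - d" "1 - d"] vang_acute[of "b - 1" "d - 1"] foot_between_normal(4)
      unfolding C_def D_def
      by (intro periodic_billiard_corner[of d 1 b 0]) (simp_all add: inner_commute)
  next
    case 8
    then show ?thesis
      using vang_right[of "0 - d" "1 - d"] vang_acute[of b d] foot_between_normal(3)
      unfolding A_def D_def
      by (intro periodic_billiard_corner[of d 0 b 1]) (simp_all add: inner_commute)
  qed
qed

end

section \<open>Reduction to the normal form\<close>

lemma quad_params_similarity:
  "k \<noteq> 0 \<Longrightarrow> quad_params (c + k * A) (c + k * B) (c + k * C) (c + k * D) = quad_params A B C D"
  by (simp add: quad_params_def vang_mult flip: right_diff_distrib)

lemma interior_angles_similarity:
  "k \<noteq> 0 \<Longrightarrow> interior_angles (c + k * A) (c + k * B) (c + k * C) (c + k * D) = interior_angles A B C D"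
  by (simp add: interior_angles_def vang_mult flip: right_diff_distrib)

lemma quad_params_cnj: "quad_params (cnj A) (cnj B) (cnj C) (cnj D) = quad_params A B C D"
  by (simp add: quad_params_def vang_cnj flip: complex_cnj_diff)

lemma interior_angles_cnj: "interior_angles (cnj A) (cnj B) (cnj C) (cnj D) = interior_angles A B C D"
  by (simp add: interior_angles_def vang_cnj flip: complex_cnj_diff)

lemma quadrilateral_similarity:
  assumes "k \<noteq> 0"
  shows "quadrilateral (c + k * A) (c + k * B) (c + k * C) (c + k * D) \<longleftrightarrow> quadrilateral A B C D"
proof -
  have "cross (k * u) (k * v) = (cmod k)\<^sup>2 * cross u v" for u v
    by (simp only: cmod_power2) (simp add: cross_def algebra_simps power2_eq_square)
  then show ?thesis
    using assms by (simp add: quadrilateral_def mult_less_0_iff zero_less_mult_iff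
        flip: right_diff_distrib)
qed

lemma has_periodic_billiard_path_similarity:
  assumes "k \<noteq> 0" "has_periodic_billiard_path A B C D"
  shows "has_periodic_billiard_path (c + k * A) (c + k * B) (c + k * C) (c + k * D)"
proof -
  have hull: "convex hull ((\<lambda>z. c + k * z) ` T) = (\<lambda>z. c + k * z) ` (convex hull T)" for T
  proof -
    have "convex hull ((\<lambda>z. c + k * z) ` T) = (+) c ` (convex hull ((*) k ` T))"
      using convex_hull_translation[of c "(*) k ` T"] by (simp add: image_image)
    also have "\<dots> = (+) c ` (*) k ` (convex hull T)"
      by (simp add: convex_hull_linear_image bounded_linear.linear[OF bounded_linear_mult_right])
    finally show ?thesis by (simp add: image_image)
  qed
  have "quad_region (c + k * A) (c + k * B) (c + k * C) (c + k * D) =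
      (\<lambda>z. c + k * z) ` quad_region A B C D"
    using hull[of "{A, B, C}"] hull[of "{A, C, D}"] by (simp add: quad_region_def image_Un)
  then show ?thesis
    using periodic_billiard_similarity[OF assms(1), of "quad_region A B C D" "quad_sides A B C D" c]
      assms(2) by (simp add: has_periodic_billiard_path_iff quad_sides_def)
qed

lemma has_periodic_billiard_path_cnj:
  assumes "has_periodic_billiard_path A B C D"
  shows "has_periodic_billiard_path (cnj A) (cnj B) (cnj C) (cnj D)"
proof -
  have hull: "convex hull (cnj ` T) = cnj ` (convex hull T)" for T
    by (simp add: convex_hull_linear_image linear_cnj)
  have "quad_region (cnj A) (cnj B) (cnj C) (cnj D) = cnj ` quad_region A B C D"
    using hull[of "{A, B, C}"] hull[of "{A, C, D}"] by (simp add: quad_region_def image_Un)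
  then show ?thesis
    using periodic_billiard_cnj[of "quad_region A B C D" "quad_sides A B C D"] assms
    by (simp add: has_periodic_billiard_path_iff quad_sides_def)
qed

lemma has_periodic_billiard_path_unit_diagonal:
  assumes "quadrilateral 0 b 1 d" "near_square (pi / 12) 0 b 1 d" "right_adj_acute 0 b 1 d"
  shows "has_periodic_billiard_path 0 b 1 d"
proof -
  have "Im b * Im d < 0" using assms(1) by (simp add: quadrilateral_def cross_def)
  then consider "0 < Im b" "Im d < 0" | "Im b < 0" "0 < Im d" by (auto simp: mult_less_0_iff)
  then show ?thesis
  proof cases
    case 1
    then show ?thesis using assms(2,3) by (rule has_periodic_billiard_path_normal)
  next
    case 2
    then have "has_periodic_billiard_path 0 (cnj b) 1 (cnj d)"
      using assms(2,3) quad_params_cnj[of 0 b 1 d] interior_angles_cnj[of 0 b 1 d]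
      by (intro has_periodic_billiard_path_normal)
        (simp_all add: near_square_def right_adj_acute_def)
    from has_periodic_billiard_path_cnj[OF this] show ?thesis by simp
  qed
qed

theorem proposition3p3p1:
  fixes A B C D :: complex
  assumes "quadrilateral A B C D"
    and "near_square (pi / 12) A B C D"
    and "right_adj_acute A B C D"
  shows "has_periodic_billiard_path A B C D"
proof -
  define k where "k = C - A"
  have "k \<noteq> 0" using assms(1) by (auto simp: quadrilateral_def cross_def k_def)
  define b d where "b = (B - A) / k" and "d = (D - A) / k"
  have vertices: "A + k * 0 = A" "A + k * b = B" "A + k * 1 = C" "A + k * d = D"
    using \<open>k \<noteq> 0\<close> by (simp_all add: b_def d_def k_def)
  have "has_periodic_billiard_path 0 b 1 d"
  proof (rule has_periodic_billiard_path_unit_diagonal)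
    show "quadrilateral 0 b 1 d"
      using assms(1) quadrilateral_similarity[OF \<open>k \<noteq> 0\<close>, of A 0 b 1 d] by (simp only: vertices)
    show "near_square (pi / 12) 0 b 1 d"
      using assms(2) quad_params_similarity[OF \<open>k \<noteq> 0\<close>, of A 0 b 1 d]
      by (simp only: vertices near_square_def)
    show "right_adj_acute 0 b 1 d"
      using assms(3) interior_angles_similarity[OF \<open>k \<noteq> 0\<close>, of A 0 b 1 d]
      by (simp only: vertices right_adj_acute_def)
  qed
  from has_periodic_billiard_path_similarity[OF \<open>k \<noteq> 0\<close> this, of A] show ?thesis
    by (simp only: vertices)
qed

end
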